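(* Let $(X,\mathcal{B})$ be a $t$-$(v,k,\lambda)$ design with $b$ blocks. Then there is a way to write each block $B\in\mathcal{B}$ as an ordered $k$-tuple of its elements such that every point $x\in X$ occurs in each of the $k$ positions in exactly $b/v$ of the ordered blocks if and only if $v$ divides $b$ (equivalently, $k$ divides the number $r=bk/v$ of blocks containing a given point).
   Context: A $t$-$(v,k,\lambda)$ design ($t\ge1$, $t\le k\le v$) is a pair $(X,\mathcal{B})$ where $X$ is a set of $v$ points and $\mathcal{B}$ is a collection of distinct $k$-subsets of $X$ (blocks) such that every $t$-subset of $X$ is contained in exactly $\lambda$ blocks; $b=|\mathcal{B}|$. Every point lies in the same number $r$ of blocks, and $bk=vr$. *)

theory Defs
  imports Complex_Main
begin

definition t_design :: "'a set \<Rightarrow> 'a set set \<Rightarrow> nat \<Rightarrow> nat \<Rightarrow> nat \<Rightarrow> nat \<Rightarrow> bool" where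
  "t_design X \<B> t v k lam \<longleftrightarrow>
     finite X \<and> card X = v \<and> 1 \<le> t \<and> t \<le> k \<and> k \<le> v \<and>
     (\<forall>B\<in>\<B>. B \<subseteq> X \<and> card B = k) \<and>
     (\<forall>T. T \<subseteq> X \<longrightarrow> card T = t \<longrightarrow> card {B\<in>\<B>. T \<subseteq> B} = lam)"

definition balanced_ordering :: "'a set \<Rightarrow> 'a set set \<Rightarrow> nat \<Rightarrow> ('a set \<Rightarrow> 'a list) \<Rightarrow> bool" where
  "balanced_ordering X \<B> k ord \<longleftrightarrow>
     (\<forall>B\<in>\<B>. distinct (ord B) \<and> set (ord B) = B \<and> length (ord B) = k) \<and>
     (\<forall>x\<in>X. \<forall>i<k. real (card {B\<in>\<B>. ord B ! i = x}) = real (card \<B>) / real (card X))"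

end

theory Submission
  imports Defs
begin

(*
  A t-design is point-regular: double counting the pairs (T, B) with x \<in> T \<subseteq> B and
  |T| = t shows that every point lies in r blocks with r v = b k.  So a balanced
  ordering forces v | b (count the blocks having a fixed point in position 0).
  Conversely, if b = v m then r = m k, and the orderings come from a general fact
  about a k-uniform family (S j)_{j\<in>J} on X with every point in exactly m k members:
  it has a balanced system of representatives c j \<in> S j (every point chosen exactly
  m times); removing them leaves a (k-1)-uniform family with point degrees m (k-1),
  so by induction on k the representatives, position by position, form the orderings.
  Balanced representatives come from an exchange argument: a choice function of
  minimal total excess over m overloads no point, since an overloaded point either
  reaches an underloaded one in the exchange graph (and shifting one unit along a
  shortest path lowers the excess) or spans a closed region carrying more choices
  than its degree sum permits.
*)

section \<open>Double counting\<close>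

lemma card_filter_sum_swap:
  assumes "finite A" "finite C"
  shows "(\<Sum>a\<in>A. card {c\<in>C. P a c}) = (\<Sum>c\<in>C. card {a\<in>A. P a c})"
proof -
  have count: "card {c\<in>D. Q c} = (\<Sum>c\<in>D. if Q c then 1 else 0::nat)" if "finite D" for D Q
    using that by (simp add: sum.If_cases Int_def)
  show ?thesis
    using assms by (simp add: count sum.swap[of _ A C])
qed

lemma sum_degrees_uniform:
  assumes "finite J" "finite X" and uniform: "\<forall>j\<in>J. S j \<subseteq> X \<and> card (S j) = k"
  shows "(\<Sum>x\<in>X. card {j\<in>J. x \<in> S j}) = card J * k"
proof -
  have "(\<Sum>x\<in>X. card {j\<in>J. x \<in> S j}) = (\<Sum>j\<in>J. card {x\<in>X. x \<in> S j})"
    using card_filter_sum_swap[OF assms(2,1)] by simp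
  also have "\<dots> = (\<Sum>j\<in>J. k)"
    using uniform by (intro sum.cong) (auto simp: Int_absorb1 Collect_conj_eq Int_commute)
  finally show ?thesis by simp
qed

section \<open>Balanced systems of representatives\<close>

definition load :: "'j set \<Rightarrow> ('j \<Rightarrow> 'a) \<Rightarrow> 'a \<Rightarrow> nat" where
  "load J c x = card {j\<in>J. c j = x}"

text \<open>The exchange graph: an edge y \<rightarrow> z means that some member represented by y
  contains z, so its representative could be switched from y to z.\<close>
definition exchange :: "'j set \<Rightarrow> ('j \<Rightarrow> 'a set) \<Rightarrow> ('j \<Rightarrow> 'a) \<Rightarrow> 'a \<Rightarrow> 'a \<Rightarrow> bool" where
  "exchange J S c y z \<longleftrightarrow> (\<exists>j\<in>J. c j = y \<and> z \<in> S j)"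

lemma sum_load:
  assumes "finite J" "finite R" "\<forall>j\<in>J. c j \<in> R"
  shows "(\<Sum>y\<in>R. load J c y) = card J"
proof -
  have "(\<Sum>y\<in>R. load J c y) = (\<Sum>j\<in>J. card {y\<in>R. c j = y})"
    unfolding load_def using card_filter_sum_swap[OF assms(1,2), of "\<lambda>j y. c j = y"] by simp
  also have "\<dots> = (\<Sum>j\<in>J. 1)"
  proof (rule sum.cong)
    fix j assume "j \<in> J"
    then have "{y\<in>R. c j = y} = {c j}" using assms(3) by auto
    then show "card {y\<in>R. c j = y} = 1" by simp
  qed simp
  finally show ?thesis by simp
qed

lemma load_reassign:
  assumes "finite J" "j \<in> J" "c j = a" "b \<noteq> a"
  shows "load J (c(j:=b)) a + 1 = load J c a"
    and "load J (c(j:=b)) b = load J c b + 1"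
    and "w \<noteq> a \<Longrightarrow> w \<noteq> b \<Longrightarrow> load J (c(j:=b)) w = load J c w"
proof -
  have "{i\<in>J. (c(j:=b)) i = a} = {i\<in>J. c i = a} - {j}"
    and "j \<in> {i\<in>J. c i = a}" and "finite {i\<in>J. c i = a}"
    using assms by auto
  then show "load J (c(j:=b)) a + 1 = load J c a"
    unfolding load_def by (metis Suc_eq_plus1 card.remove)
next
  have "{i\<in>J. (c(j:=b)) i = b} = insert j {i\<in>J. c i = b}"
    and "j \<notin> {i\<in>J. c i = b}" and "finite {i\<in>J. c i = b}"
    using assms by auto
  then show "load J (c(j:=b)) b = load J c b + 1"
    unfolding load_def by simp
next
  assume "w \<noteq> a" "w \<noteq> b"
  then have "{i\<in>J. (c(j:=b)) i = w} = {i\<in>J. c i = w}" using assms by auto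
  then show "load J (c(j:=b)) w = load J c w" unfolding load_def by simp
qed

text \<open>A path that avoids the vertex a survives any change of the relation that only
  affects edges leaving a.  A path from u to z of length m avoids a as soon as a
  reaches z in no more than m steps.\<close>
lemma relpowp_avoiding:
  fixes R R' :: "'a \<Rightarrow> 'a \<Rightarrow> bool"
  assumes "(R ^^ m) u z" "\<forall>i\<le>m. \<not> (R ^^ i) a z" "\<forall>u v. R u v \<longrightarrow> u \<noteq> a \<longrightarrow> R' u v"
  shows "(R' ^^ m) u z"
  using assms(1,2)
proof (induction m arbitrary: u)
  case 0
  then show ?case by auto
next
  case (Suc m)
  from Suc.prems(1) obtain w where w: "R u w" "(R ^^ m) w z"
    by (metis relpowp_Suc_D2)
  have "u \<noteq> a" using Suc.prems by blast
  then have "R' u w" using w(1) assms(3) by blast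
  moreover have "(R' ^^ m) w z" using Suc.IH[OF w(2)] Suc.prems(2) by simp
  ultimately show ?case by (rule relpowp_Suc_I2)
qed

text \<open>Augmentation along a shortest exchange path from y0 to z: switching the
  representatives along the path moves one unit of load from y0 to z and leaves every
  other load unchanged.\<close>
lemma exchange_path_shift:
  assumes "finite J"
  shows "(exchange J S c ^^ n) y0 z \<Longrightarrow> y0 \<noteq> z \<Longrightarrow> \<forall>j\<in>J. c j \<in> S j \<Longrightarrow>
    \<exists>c'. (\<forall>j\<in>J. c' j \<in> S j) \<and> load J c' y0 + 1 = load J c y0 \<and>
         load J c' z = load J c z + 1 \<and> (\<forall>w. w \<noteq> y0 \<longrightarrow> w \<noteq> z \<longrightarrow> load J c' w = load J c w)"
proof (induction n arbitrary: c y0 rule: less_induct)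
  case (less n c y0)
  show ?case
  proof (cases "\<exists>i<n. (exchange J S c ^^ i) y0 z")
    case True
    then show ?thesis using less by blast
  next
    case shortest: False
    obtain n' where n': "n = Suc n'"
      using less.prems(1,2) by (cases n) auto
    from less.prems(1) obtain y1 where y1: "exchange J S c y0 y1" "(exchange J S c ^^ n') y1 z"
      unfolding n' by (metis relpowp_Suc_D2)
    from y1(1) obtain j where j: "j \<in> J" "c j = y0" "y1 \<in> S j"
      unfolding exchange_def by blast
    have "y1 \<noteq> y0" using shortest y1(2) n' by blast
    define c1 where "c1 = c(j := y1)"
    have valid1: "\<forall>i\<in>J. c1 i \<in> S i" using less.prems(3) j unfolding c1_def by auto
    note step = load_reassign[of J j c y0 y1, OF assms j(1,2) \<open>y1 \<noteq> y0\<close>, folded c1_def]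
    show ?thesis
    proof (cases "y1 = z")
      case True
      then show ?thesis using valid1 step by blast
    next
      case False
      have "(exchange J S c1 ^^ n') y1 z"
      proof (rule relpowp_avoiding[OF y1(2)])
        show "\<forall>i\<le>n'. \<not> (exchange J S c ^^ i) y0 z" using shortest n' by auto
        show "\<forall>u v. exchange J S c u v \<longrightarrow> u \<noteq> y0 \<longrightarrow> exchange J S c1 u v"
          unfolding exchange_def c1_def using j by auto
      qed
      with less.IH[of n' c1 y1] n' False valid1 obtain c' where c':
        "\<forall>i\<in>J. c' i \<in> S i" "load J c' y1 + 1 = load J c1 y1" "load J c' z = load J c1 z + 1"
        "\<forall>w. w \<noteq> y1 \<longrightarrow> w \<noteq> z \<longrightarrow> load J c' w = load J c1 w" by blast
      have "load J c' y0 + 1 = load J c y0"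
        using c'(4) step(1) \<open>y1 \<noteq> y0\<close> less.prems(2) by metis
      moreover have "load J c' z = load J c z + 1"
        using c'(3) step(3)[of z] False less.prems(2) by simp
      moreover have "load J c' w = load J c w" if "w \<noteq> y0" "w \<noteq> z" for w
        using c'(2,4) step(2,3) that by (cases "w = y1") auto
      ultimately show ?thesis using c'(1) by blast
    qed
  qed
qed

definition excess :: "'a set \<Rightarrow> 'j set \<Rightarrow> ('j \<Rightarrow> 'a) \<Rightarrow> nat \<Rightarrow> nat" where
  "excess X J c m = (\<Sum>x\<in>X. load J c x - m)"

lemma excess_shift_decreases:
  assumes "finite X" "x \<in> X" "m < load J c x" "load J c z < m"
    and "load J c' x + 1 = load J c x" "load J c' z = load J c z + 1"
    and "\<forall>w. w \<noteq> x \<longrightarrow> w \<noteq> z \<longrightarrow> load J c' w = load J c w"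
  shows "excess X J c' m < excess X J c m"
  unfolding excess_def
proof (rule sum_strict_mono_ex1[OF assms(1)])
  show "\<forall>w\<in>X. load J c' w - m \<le> load J c w - m"
  proof
    fix w assume "w \<in> X"
    show "load J c' w - m \<le> load J c w - m"
      using assms(4-7) by (cases "w = x"; cases "w = z") auto
  qed
  show "\<exists>w\<in>X. load J c' w - m < load J c w - m"
    using assms(2,3,5) by (intro bexI[of _ x]) auto
qed

lemma closed_region_load_bound:
  assumes finJ: "finite J" and finR: "finite R" and kpos: "0 < k"
    and uniform: "\<forall>j\<in>J. card (S j) = k"
    and degree: "\<forall>x\<in>R. card {j\<in>J. x \<in> S j} = m * k"
    and closed: "\<forall>j\<in>J. c j \<in> R \<longrightarrow> S j \<subseteq> R"
  shows "card {j\<in>J. c j \<in> R} \<le> m * card R"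
proof -
  define JR where "JR = {j\<in>J. c j \<in> R}"
  have "k * card JR = (\<Sum>j\<in>JR. card {y\<in>R. y \<in> S j})"
  proof -
    have "\<forall>j\<in>JR. {y\<in>R. y \<in> S j} = S j" using closed unfolding JR_def by blast
    then show ?thesis using uniform unfolding JR_def by simp
  qed
  also have "\<dots> \<le> (\<Sum>j\<in>J. card {y\<in>R. y \<in> S j})"
    by (rule sum_mono2[OF finJ]) (auto simp: JR_def)
  also have "\<dots> = (\<Sum>y\<in>R. card {j\<in>J. y \<in> S j})"
    using card_filter_sum_swap[OF finJ finR] by simp
  also have "\<dots> = k * (m * card R)" using degree by simp
  finally show ?thesis using kpos unfolding JR_def by simp
qed

text \<open>A choice function minimising the total excess over m never overloads a point:
  an overloaded point either reaches an underloaded one by an exchange path (and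
  augmenting along it lowers the excess) or spans a closed region that is overloaded
  on the whole, contradicting the previous lemma.\<close>
lemma minimal_excess_load_bounded:
  assumes finJ: "finite J" and finX: "finite X" and kpos: "0 < k"
    and uniform: "\<forall>j\<in>J. S j \<subseteq> X \<and> card (S j) = k"
    and degree: "\<forall>x\<in>X. card {j\<in>J. x \<in> S j} = m * k"
    and valid: "\<forall>j\<in>J. c j \<in> S j"
    and minimal: "\<And>c'. \<forall>j\<in>J. c' j \<in> S j \<Longrightarrow> excess X J c m \<le> excess X J c' m"
  shows "\<forall>x\<in>X. load J c x \<le> m"
proof (rule ccontr)
  assume "\<not> (\<forall>x\<in>X. load J c x \<le> m)"
  then obtain x where xX: "x \<in> X" and over: "load J c x > m" by auto
  define R where "R = {y. (exchange J S c)\<^sup>*\<^sup>* x y}"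
  have RX: "R \<subseteq> X"
  proof
    fix y assume "y \<in> R"
    then have "(exchange J S c)\<^sup>*\<^sup>* x y" unfolding R_def by simp
    then show "y \<in> X"
      by (induction rule: rtranclp_induct) (use xX uniform in \<open>auto simp: exchange_def\<close>)
  qed
  have finR: "finite R" using RX finX finite_subset by blast
  show False
  proof (cases "\<exists>z\<in>R. load J c z < m")
    case True
    then obtain z where zR: "z \<in> R" and under: "load J c z < m" by blast
    have "x \<noteq> z" using under over by auto
    from zR obtain n where "(exchange J S c ^^ n) x z"
      unfolding R_def using rtranclp_imp_relpowp by fastforce
    from exchange_path_shift[OF finJ this \<open>x \<noteq> z\<close> valid] obtain c' where c':
      "\<forall>j\<in>J. c' j \<in> S j" "load J c' x + 1 = load J c x" "load J c' z = load J c z + 1"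
      "\<forall>w. w \<noteq> x \<longrightarrow> w \<noteq> z \<longrightarrow> load J c' w = load J c w" by blast
    have "excess X J c' m < excess X J c m"
      using excess_shift_decreases[OF finX xX over under c'(2-4)] .
    then show False using minimal[OF c'(1)] by simp
  next
    case False
    have closed: "\<forall>j\<in>J. c j \<in> R \<longrightarrow> S j \<subseteq> R"
      unfolding R_def exchange_def by (auto intro: rtranclp.rtrancl_into_rtrancl)
    have "(\<Sum>y\<in>R. m) < (\<Sum>y\<in>R. load J c y)"
      using False over by (intro sum_strict_mono_ex1[OF finR]) (auto simp: not_less R_def)
    also have "(\<Sum>y\<in>R. load J c y) = card {j\<in>J. c j \<in> R}"
    proof -
      have "(\<Sum>y\<in>R. load J c y) = (\<Sum>y\<in>R. load {j\<in>J. c j \<in> R} c y)"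
        unfolding load_def by (intro sum.cong) (auto intro!: arg_cong[where f=card])
      also have "\<dots> = card {j\<in>J. c j \<in> R}" by (rule sum_load) (use finJ finR in auto)
      finally show ?thesis .
    qed
    also have "\<dots> \<le> m * card R"
    proof (rule closed_region_load_bound[OF finJ finR kpos _ _ closed])
      show "\<forall>j\<in>J. card (S j) = k" and "\<forall>y\<in>R. card {j\<in>J. y \<in> S j} = m * k"
        using uniform degree RX by auto
    qed
    finally show False by (simp add: mult.commute)
  qed
qed

lemma balanced_representatives:
  assumes finJ: "finite J" and finX: "finite X" and kpos: "0 < k"
    and uniform: "\<forall>j\<in>J. S j \<subseteq> X \<and> card (S j) = k"
    and degree: "\<forall>x\<in>X. card {j\<in>J. x \<in> S j} = m * k"
  shows "\<exists>c. (\<forall>j\<in>J. c j \<in> S j) \<and> (\<forall>x\<in>X. load J c x = m)"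
proof -
  define valid where "valid c \<longleftrightarrow> (\<forall>j\<in>J. c j \<in> S j)" for c
  have "valid (\<lambda>j. SOME x. x \<in> S j)"
    unfolding valid_def
  proof
    fix j assume "j \<in> J"
    then have "S j \<noteq> {}" using uniform kpos by fastforce
    then show "(SOME x. x \<in> S j) \<in> S j" by (simp add: some_in_eq)
  qed
  then obtain c where vc: "valid c"
    and minimal: "\<forall>c'. valid c' \<longrightarrow> excess X J c m \<le> excess X J c' m"
    using ex_has_least_nat[of valid _ "\<lambda>c. excess X J c m"] by blast
  have bounded: "\<forall>x\<in>X. load J c x \<le> m"
    using minimal_excess_load_bounded[OF finJ finX kpos uniform degree] vc minimal
    unfolding valid_def by blast
  have "(\<Sum>x\<in>X. load J c x) = card J"
    using sum_load[OF finJ finX] vc uniform unfolding valid_def by blast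
  moreover have "card J * k = card X * m * k"
    using sum_degrees_uniform[OF finJ finX uniform] degree by auto
  ultimately have total: "(\<Sum>x\<in>X. load J c x) = (\<Sum>x\<in>X. m)" using kpos by simp
  have "load J c x = m" if "x \<in> X" for x
    using sum_mono_inv[OF total _ that finX] bounded by blast
  then show ?thesis using vc unfolding valid_def by blast
qed

text \<open>Balanced orderings: peeling off a balanced system of representatives as the first
  position and recursing on the remaining (k-1)-uniform family orders every member so
  that each point occupies each of the k positions in exactly m members.\<close>
lemma balanced_orderings_of_regular_family:
  assumes "finite J" "finite X"
  shows "\<forall>j\<in>J. S j \<subseteq> X \<and> card (S j) = k \<Longrightarrow> \<forall>x\<in>X. card {j\<in>J. x \<in> S j} = m * k \<Longrightarrow>
    \<exists>f. (\<forall>j\<in>J. distinct (f j) \<and> set (f j) = S j \<and> length (f j) = k) \<and>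
        (\<forall>x\<in>X. \<forall>i<k. card {j\<in>J. f j ! i = x} = m)"
proof (induction k arbitrary: S)
  case 0
  then have "\<forall>j\<in>J. S j = {}" using assms(2) by (metis card_0_eq finite_subset)
  then show ?case by (intro exI[of _ "\<lambda>_. []"]) auto
next
  case (Suc k)
  obtain c where c: "\<forall>j\<in>J. c j \<in> S j" "\<forall>x\<in>X. load J c x = m"
    using balanced_representatives[OF assms _ Suc.prems] by blast
  define S' where "S' j = S j - {c j}" for j
  have uniform': "\<forall>j\<in>J. S' j \<subseteq> X \<and> card (S' j) = k"
    using Suc.prems(1) c(1) assms(2) finite_subset unfolding S'_def by fastforce
  have degree': "\<forall>x\<in>X. card {j\<in>J. x \<in> S' j} = m * k"
  proof
    fix x assume "x \<in> X"
    have "{j\<in>J. x \<in> S' j} = {j\<in>J. x \<in> S j} - {j\<in>J. c j = x}"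
      and "{j\<in>J. c j = x} \<subseteq> {j\<in>J. x \<in> S j}"
      using c(1) unfolding S'_def by auto
    then have "card {j\<in>J. x \<in> S' j} = card {j\<in>J. x \<in> S j} - load J c x"
      using assms(1) unfolding load_def by (simp add: card_Diff_subset)
    also have "\<dots> = m * Suc k - m" using c(2) \<open>x \<in> X\<close> Suc.prems(2) by simp
    finally show "card {j\<in>J. x \<in> S' j} = m * k" by simp
  qed
  obtain f where f: "\<forall>j\<in>J. distinct (f j) \<and> set (f j) = S' j \<and> length (f j) = k"
    "\<forall>x\<in>X. \<forall>i<k. card {j\<in>J. f j ! i = x} = m"
    using Suc.IH[OF uniform' degree'] by blast
  define g where "g j = c j # f j" for j
  have "\<forall>j\<in>J. distinct (g j) \<and> set (g j) = S j \<and> length (g j) = Suc k"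
    using f(1) c(1) unfolding g_def S'_def by auto
  moreover have "card {j\<in>J. g j ! i = x} = m" if "x \<in> X" "i < Suc k" for x i
    using c(2) f(2) that unfolding g_def load_def by (cases i) auto
  ultimately show ?case by blast
qed

section \<open>Point-regularity of t-designs\<close>

lemma card_subsets_through_point:
  assumes "finite B" "x \<in> B" "1 \<le> t"
  shows "card {T. T \<subseteq> B \<and> x \<in> T \<and> card T = t} = (card B - 1) choose (t - 1)"
proof -
  let ?U = "{U. U \<subseteq> B - {x} \<and> card U = t - 1}"
  have "{T. T \<subseteq> B \<and> x \<in> T \<and> card T = t} = insert x ` ?U"
  proof (intro equalityI subsetI)
    fix T assume T: "T \<in> {T. T \<subseteq> B \<and> x \<in> T \<and> card T = t}"
    then have "T - {x} \<in> ?U" using assms(1) finite_subset by fastforce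
    moreover have "T = insert x (T - {x})" using T by auto
    ultimately show "T \<in> insert x ` ?U" by blast
  next
    fix T assume "T \<in> insert x ` ?U"
    then obtain U where U: "U \<in> ?U" "T = insert x U" by blast
    have "finite U" "x \<notin> U" using U(1) assms(1) finite_subset by auto
    then show "T \<in> {T. T \<subseteq> B \<and> x \<in> T \<and> card T = t}" using U assms by auto
  qed
  moreover have "inj_on (insert x) ?U"
    by (rule inj_onI) (metis Diff_insert_absorb mem_Collect_eq subset_Diff_insert)
  ultimately have "card {T. T \<subseteq> B \<and> x \<in> T \<and> card T = t} = card ?U"
    by (simp add: card_image)
  also have "\<dots> = card (B - {x}) choose (t - 1)" using n_subsets assms(1) by blast
  finally show ?thesis using assms by simp
qed

lemma t_design_finite:
  assumes "t_design X \<B> t v k lam"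
  shows "finite X" "finite \<B>"
  using assms unfolding t_design_def by (auto intro: finite_subset[of \<B> "Pow X"])

text \<open>Double counting the pairs (T, B) with x \<in> T \<subseteq> B, |T| = t: the replication
  number r_x of a point satisfies r_x C(k-1, t-1) = \<lambda> C(v-1, t-1).\<close>
lemma t_design_replication_identity:
  assumes D: "t_design X \<B> t v k lam" and xX: "x \<in> X"
  shows "card {B\<in>\<B>. x \<in> B} * ((k - 1) choose (t - 1)) = lam * ((v - 1) choose (t - 1))"
proof -
  note d = D[unfolded t_design_def]
  define Tx where "Tx = {T. T \<subseteq> X \<and> x \<in> T \<and> card T = t}"
  define Bx where "Bx = {B\<in>\<B>. x \<in> B}"
  have finTx: "finite Tx" unfolding Tx_def using t_design_finite[OF D] by simp
  have finBx: "finite Bx" unfolding Bx_def using t_design_finite[OF D] by simp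
  have "card Bx * ((k - 1) choose (t - 1)) = (\<Sum>B\<in>Bx. card {T\<in>Tx. T \<subseteq> B})"
  proof -
    have "card {T\<in>Tx. T \<subseteq> B} = (k - 1) choose (t - 1)" if "B \<in> Bx" for B
    proof -
      have B: "B \<subseteq> X" "card B = k" "x \<in> B" using that d unfolding Bx_def by auto
      then have "{T\<in>Tx. T \<subseteq> B} = {T. T \<subseteq> B \<and> x \<in> T \<and> card T = t}" unfolding Tx_def by auto
      moreover have "finite B" using B(1) d finite_subset by blast
      ultimately show ?thesis
        using card_subsets_through_point[OF _ B(3)] B(2) d by simp
    qed
    then show ?thesis by simp
  qed
  also have "\<dots> = (\<Sum>T\<in>Tx. card {B\<in>Bx. T \<subseteq> B})"
    by (rule card_filter_sum_swap[OF finBx finTx])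
  also have "\<dots> = (\<Sum>T\<in>Tx. lam)"
  proof (rule sum.cong)
    fix T assume T: "T \<in> Tx"
    then have "{B\<in>Bx. T \<subseteq> B} = {B\<in>\<B>. T \<subseteq> B}" unfolding Bx_def Tx_def by auto
    then show "card {B\<in>Bx. T \<subseteq> B} = lam" using d T unfolding Tx_def by auto
  qed simp
  also have "\<dots> = lam * ((v - 1) choose (t - 1))"
    unfolding Tx_def using card_subsets_through_point[OF _ xX] d by simp
  finally show ?thesis unfolding Bx_def .
qed

lemma t_design_replication_number:
  assumes D: "t_design X \<B> t v k lam" and xX: "x \<in> X"
  shows "card {B\<in>\<B>. x \<in> B} * v = card \<B> * k"
proof -
  note d = D[unfolded t_design_def]
  note fin = t_design_finite[OF D]
  have nonzero: "(k - 1) choose (t - 1) \<noteq> 0" using d by (simp add: diff_le_mono not_less)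
  have same_degree: "card {B\<in>\<B>. y \<in> B} = card {B\<in>\<B>. x \<in> B}" if "y \<in> X" for y
    using t_design_replication_identity[OF D xX] t_design_replication_identity[OF D that] nonzero
    by (metis mult_right_cancel)
  have "card \<B> * k = (\<Sum>y\<in>X. card {B\<in>\<B>. y \<in> id B})"
    using sum_degrees_uniform[OF fin(2,1), of id k] d by simp
  also have "\<dots> = card {B\<in>\<B>. x \<in> B} * v" using same_degree d by simp
  finally show ?thesis by simp
qed

text \<open>Counting the blocks with a fixed point in the first position shows that a
  balanced ordering can only exist when |X| divides the number of blocks.\<close>
lemma balanced_ordering_imp_dvd:
  assumes "balanced_ordering X \<B> k ord" "finite X" "x \<in> X" "0 < k"
  shows "card X dvd card \<B>"
proof -
  have "real (card {B\<in>\<B>. ord B ! 0 = x}) = real (card \<B>) / real (card X)"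
    using assms unfolding balanced_ordering_def by blast
  moreover have "card X > 0" using assms(2,3) card_gt_0_iff by blast
  ultimately have "card \<B> = card {B\<in>\<B>. ord B ! 0 = x} * card X"
    by (simp add: field_simps flip: of_nat_mult)
  then show ?thesis by simp
qed

lemma t_design_balanced_ordering_exists:
  assumes D: "t_design X \<B> t v k lam" and "v dvd card \<B>"
  shows "\<exists>ord. balanced_ordering X \<B> k ord"
proof -
  note d = D[unfolded t_design_def]
  obtain m where m: "card \<B> = v * m" using assms(2) by blast
  have uniform: "\<forall>B\<in>\<B>. id B \<subseteq> X \<and> card (id B) = k" using d by simp
  have "card {B\<in>\<B>. x \<in> id B} * v = m * k * v" if "x \<in> X" for x
    using t_design_replication_number[OF D that] m by auto
  moreover have "0 < v" using d by auto
  ultimately have degree: "\<forall>x\<in>X. card {B\<in>\<B>. x \<in> id B} = m * k"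
    by simp
  obtain ord where ord:
    "\<forall>B\<in>\<B>. distinct (ord B) \<and> set (ord B) = B \<and> length (ord B) = k"
    "\<forall>x\<in>X. \<forall>i<k. card {B\<in>\<B>. ord B ! i = x} = m"
    using balanced_orderings_of_regular_family[OF t_design_finite(2,1)[OF D] uniform degree]
    by auto
  have "real m = real (card \<B>) / real (card X)"
    using m d by simp
  then have "balanced_ordering X \<B> k ord"
    unfolding balanced_ordering_def using ord by simp
  then show ?thesis by blast
qed

theorem mainTheorem4:
  fixes X :: "'a set" and \<B> :: "'a set set" and t v k lam :: nat
  assumes "t_design X \<B> t v k lam"
  shows "(\<exists>ord. balanced_ordering X \<B> k ord) \<longleftrightarrow> v dvd card \<B>"
proof
  assume "\<exists>ord. balanced_ordering X \<B> k ord"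
  then obtain ord where ord: "balanced_ordering X \<B> k ord" by blast
  have "finite X" "card X = v" "0 < k" "0 < v"
    using assms unfolding t_design_def by auto
  moreover obtain x where "x \<in> X" using \<open>card X = v\<close> \<open>0 < v\<close> by fastforce
  ultimately show "v dvd card \<B>"
    using balanced_ordering_imp_dvd[OF ord] by blast
next
  assume "v dvd card \<B>"
  then show "\<exists>ord. balanced_ordering X \<B> k ord"
    using t_design_balanced_ordering_exists[OF assms] by blast
qed

end
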